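(* Let $n\ge3$ and let $X_n$ be a connected Coxeter graph with $n$ vertices of one of the types $A_n$, $B_n$, $D_n$, $F_4$, $H_3$, $H_4$. Then the maps $y_i\mapsto x_i$ and $x_i\mapsto x_i$ define surjective length-preserving monoid homomorphisms $$K^{\infty}_n \xrightarrow{\ \phi\ } \mathcal{X}^{\infty}_n \xrightarrow{\ \psi\ } \mathcal{X}^{+}_n .$$
   Context: Coxeter graphs and the types: $A_n$ is the path $x_1-\cdots-x_n$ with all labels $3$; $B_n$ the same path with edge $x_{n-1}x_n$ labeled $4$; $D_n$ ($n\ge4$) is the path $x_1-\cdots-x_{n-2}$ with $x_{n-1}$ and $x_n$ both joined to $x_{n-2}$ (labels $3$); $F_4$ is the path $x_1-x_2-x_3-x_4$ with $x_2x_3$ labeled $4$; $H_3,H_4$ are paths on $3$, resp. $4$ vertices with $x_1x_2$ labeled $5$. For a graph with labels $r_{ij}$ ($r_{ij}=2$ if no edge), $\mathcal{X}^{+}_n=\langle x_1,\dots,x_n\mid x_ix_jx_i\cdots=x_jx_ix_j\cdots$ (both sides of length $r_{ij}$)$\rangle$ is the Artin monoid, and $\mathcal{X}^{\infty}_n$ is the associated right-angled monoid obtained by replacing every label $\ge3$ by $\infty$, i.e. $\mathcal{X}^{\infty}_n=\langle x_1,\dots,x_n\mid x_ix_j=x_jx_i \text{ whenever } x_i,x_j \text{ are not joined by an edge}\rangle$. For $n\ge3$, $K^{\infty}_n=\langle y_1,\dots,y_n\mid y_iy_j=y_jy_i\ (j+2\le i\le n-1),\ y_ny_k=y_ky_n\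 (1\le k\le n-3)\rangle$. *)

theory Defs
  imports "HOL-Algebra.Group"
begin

text \<open>Words are lists of generator indices; generators are indexed 1..n.
  The congruence generated by a set of relations R (pairs of words).\<close>

inductive pres_eq :: "(nat list \<times> nat list) set \<Rightarrow> nat list \<Rightarrow> nat list \<Rightarrow> bool"
  for R where
  pres_refl: "pres_eq R w w"
| pres_rel: "(u, v) \<in> R \<Longrightarrow> pres_eq R (p @ u @ s) (p @ v @ s)"
| pres_sym: "pres_eq R u v \<Longrightarrow> pres_eq R v u"
| pres_trans: "pres_eq R u v \<Longrightarrow> pres_eq R v w \<Longrightarrow> pres_eq R u w"

definition cls :: "(nat list \<times> nat list) set \<Rightarrow> nat list \<Rightarrow> nat list set" where
  "cls R w = {v. pres_eq R w v}"

definition rep :: "nat list set \<Rightarrow> nat list" where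
  "rep C = (SOME w. w \<in> C)"

definition pres_monoid :: "nat \<Rightarrow> (nat list \<times> nat list) set \<Rightarrow> nat list set monoid" where
  "pres_monoid n R =
     \<lparr> carrier = {cls R w | w. set w \<subseteq> {1..n}},
       mult = (\<lambda>C D. cls R (rep C @ rep D)),
       one = cls R [] \<rparr>"

text \<open>Length of an element (well defined for homogeneous relations).\<close>
definition elem_len :: "nat list set \<Rightarrow> nat" where
  "elem_len C = length (rep C)"

datatype cox_type = TA nat | TB nat | TD nat | TF4 | TH3 | TH4

fun rank :: "cox_type \<Rightarrow> nat" where
  "rank (TA n) = n" | "rank (TB n) = n" | "rank (TD n) = n"
| "rank TF4 = 4" | "rank TH3 = 3" | "rank TH4 = 4"

text \<open>Label of the (directed) edge i--j for i<j; 2 means no edge.\<close>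
fun lab0 :: "cox_type \<Rightarrow> nat \<Rightarrow> nat \<Rightarrow> nat" where
  "lab0 (TA n) i j = (if 1 \<le> i \<and> j = i + 1 \<and> j \<le> n then 3 else 2)"
| "lab0 (TB n) i j = (if 1 \<le> i \<and> j = i + 1 \<and> j \<le> n then (if j = n then 4 else 3) else 2)"
| "lab0 (TD n) i j = (if (1 \<le> i \<and> j = i + 1 \<and> j \<le> n - 2) \<or> (i = n - 2 \<and> (j = n - 1 \<or> j = n))
                        then 3 else 2)"
| "lab0 TF4 i j = (if (i, j) = (1, 2) \<or> (i, j) = (3, 4) then 3 else if (i, j) = (2, 3) then 4 else 2)"
| "lab0 TH3 i j = (if (i, j) = (1, 2) then 5 else if (i, j) = (2, 3) then 3 else 2)"
| "lab0 TH4 i j = (if (i, j) = (1, 2) then 5 else if (i, j) = (2, 3) \<or> (i, j) = (3, 4) then 3 else 2)"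

definition lab :: "cox_type \<Rightarrow> nat \<Rightarrow> nat \<Rightarrow> nat" where
  "lab T i j = (if i < j then lab0 T i j else lab0 T j i)"

fun alt :: "nat \<Rightarrow> nat \<Rightarrow> nat \<Rightarrow> nat list" where
  "alt i j 0 = []"
| "alt i j (Suc r) = i # alt j i r"

definition artin_rels :: "cox_type \<Rightarrow> (nat list \<times> nat list) set" where
  "artin_rels T = {(alt i j (lab T i j), alt j i (lab T i j)) | i j.
      i \<in> {1..rank T} \<and> j \<in> {1..rank T} \<and> i \<noteq> j}"

definition ra_rels :: "cox_type \<Rightarrow> (nat list \<times> nat list) set" where
  "ra_rels T = {([i, j], [j, i]) | i j.
      i \<in> {1..rank T} \<and> j \<in> {1..rank T} \<and> i \<noteq> j \<and> lab T i j = 2}"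

definition K_rels :: "nat \<Rightarrow> (nat list \<times> nat list) set" where
  "K_rels n = {([i, j], [j, i]) | i j. 1 \<le> j \<and> j + 2 \<le> i \<and> i \<le> n - 1}
            \<union> {([n, k], [k, n]) | k. 1 \<le> k \<and> k + 3 \<le> n}"

definition artin_monoid :: "cox_type \<Rightarrow> nat list set monoid" where
  "artin_monoid T = pres_monoid (rank T) (artin_rels T)"

definition ra_monoid :: "cox_type \<Rightarrow> nat list set monoid" where
  "ra_monoid T = pres_monoid (rank T) (ra_rels T)"

definition K_monoid :: "nat \<Rightarrow> nat list set monoid" where
  "K_monoid n = pres_monoid n (K_rels n)"

definition allowed_type :: "cox_type \<Rightarrow> bool" where
  "allowed_type T = (case T of TA n \<Rightarrow> n \<ge> 3 | TB n \<Rightarrow> n \<ge> 3 | TD n \<Rightarrow> n \<ge> 4 | _ \<Rightarrow> True)"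

definition gen_hom :: "nat \<Rightarrow> nat list set monoid \<Rightarrow> nat list set monoid
                       \<Rightarrow> (nat list set \<Rightarrow> nat list set) \<Rightarrow> bool" where
  "gen_hom n M N f \<longleftrightarrow>
     f \<in> hom M N \<and> f \<one>\<^bsub>M\<^esub> = \<one>\<^bsub>N\<^esub> \<and>
     f ` carrier M = carrier N \<and>
     (\<forall>C \<in> carrier M. elem_len (f C) = elem_len C)"

end

theory Submission
  imports Defs
begin

text \<open>Every relation of \<open>K\<^sup>\<infinity>\<^sub>n\<close> is a commutation of two generators that are not joined in
  the Coxeter graph, so it is a relation of \<open>\<X>\<^sup>\<infinity>\<^sub>n\<close>; and a commutation is the Artin
  relation of label 2, so every relation of \<open>\<X>\<^sup>\<infinity>\<^sub>n\<close> is one of \<open>\<X>\<^sup>+\<^sub>n\<close>. Hence the identity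
  on words descends to maps of the quotient monoids, which are automatically surjective
  homomorphisms, and they preserve length because all relations are homogeneous.\<close>

definition homogeneous :: "(nat list \<times> nat list) set \<Rightarrow> bool" where
  "homogeneous R \<longleftrightarrow> (\<forall>(u, v) \<in> R. length u = length v)"

definition pres_map :: "(nat list \<times> nat list) set \<Rightarrow> nat list set \<Rightarrow> nat list set" where
  "pres_map R C = cls R (rep C)"

lemma pres_eq_rel: "(u, v) \<in> R \<Longrightarrow> pres_eq R u v"
  using pres_rel[of u v R "[]" "[]"] by simp

lemma pres_eq_context: "pres_eq R u v \<Longrightarrow> pres_eq R (p @ u @ s) (p @ v @ s)"
proof (induction rule: pres_eq.induct)
  case (pres_rel u v q t)
  then have "pres_eq R ((p @ q) @ u @ (t @ s)) ((p @ q) @ v @ (t @ s))"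
    by (rule pres_eq.pres_rel)
  then show ?case by simp
qed (auto intro: pres_eq.intros)

lemma pres_eq_append:
  assumes "pres_eq R a a'" and "pres_eq R b b'"
  shows "pres_eq R (a @ b) (a' @ b')"
proof -
  have "pres_eq R ([] @ a @ b) ([] @ a' @ b)" using pres_eq_context[OF assms(1)] .
  moreover have "pres_eq R (a' @ b @ []) (a' @ b' @ [])" using pres_eq_context[OF assms(2)] .
  ultimately show ?thesis by (auto intro: pres_trans)
qed

lemma pres_eq_mono:
  "pres_eq R u v \<Longrightarrow> (\<And>a b. (a, b) \<in> R \<Longrightarrow> pres_eq R' a b) \<Longrightarrow> pres_eq R' u v"
  by (induction rule: pres_eq.induct) (auto intro: pres_eq.intros pres_eq_context)

lemma pres_eq_length: "pres_eq R u v \<Longrightarrow> homogeneous R \<Longrightarrow> length u = length v"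
  by (induction rule: pres_eq.induct) (auto simp: homogeneous_def)

lemma cls_eq_iff: "cls R u = cls R v \<longleftrightarrow> pres_eq R u v"
  unfolding cls_def by (auto intro: pres_eq.intros)

lemma pres_eq_rep_cls: "pres_eq R w (rep (cls R w))"
proof -
  have "w \<in> cls R w" by (simp add: cls_def pres_refl)
  then have "rep (cls R w) \<in> cls R w" unfolding rep_def by (rule someI)
  then show ?thesis by (simp add: cls_def)
qed

lemma elem_len_cls: "homogeneous R \<Longrightarrow> elem_len (cls R w) = length w"
  unfolding elem_len_def by (rule sym, rule pres_eq_length[OF pres_eq_rep_cls])

lemma carrier_pres_monoid: "carrier (pres_monoid n R) = {cls R w | w. set w \<subseteq> {1..n}}"
  by (simp add: pres_monoid_def)

lemma mult_pres_monoid: "cls R u \<otimes>\<^bsub>pres_monoid n R\<^esub> cls R v = cls R (u @ v)"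
  using pres_eq_append[OF pres_eq_rep_cls pres_eq_rep_cls, of R u v]
  by (simp add: pres_monoid_def cls_eq_iff pres_sym)

lemma one_pres_monoid: "\<one>\<^bsub>pres_monoid n R\<^esub> = cls R []"
  by (simp add: pres_monoid_def)

context
  fixes R R' :: "(nat list \<times> nat list) set"
  assumes relations_hold: "\<And>u v. (u, v) \<in> R \<Longrightarrow> pres_eq R' u v"
begin

lemma pres_map_cls: "pres_map R' (cls R w) = cls R' w"
  unfolding pres_map_def cls_eq_iff
  by (rule pres_sym, rule pres_eq_mono[OF pres_eq_rep_cls relations_hold])

lemma pres_map_hom: "pres_map R' \<in> hom (pres_monoid n R) (pres_monoid n R')"
  by (auto simp: hom_def carrier_pres_monoid mult_pres_monoid pres_map_cls)

lemma pres_map_surj: "pres_map R' ` carrier (pres_monoid n R) = carrier (pres_monoid n R')"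
proof -
  have "pres_map R' ` carrier (pres_monoid n R) = pres_map R' ` cls R ` {w. set w \<subseteq> {1..n}}"
    by (auto simp: carrier_pres_monoid)
  also have "\<dots> = cls R' ` {w. set w \<subseteq> {1..n}}"
    by (simp add: image_image pres_map_cls)
  also have "\<dots> = carrier (pres_monoid n R')"
    by (auto simp: carrier_pres_monoid)
  finally show ?thesis .
qed

lemma pres_map_preserves_elem_len:
  assumes "homogeneous R" and "homogeneous R'" and "C \<in> carrier (pres_monoid n R)"
  shows "elem_len (pres_map R' C) = elem_len C"
proof -
  obtain w where "C = cls R w" using assms(3) by (auto simp: carrier_pres_monoid)
  then show ?thesis by (simp add: pres_map_cls elem_len_cls assms(1,2))
qed

lemma pres_map_gen_hom:
  assumes "homogeneous R" and "homogeneous R'"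
  shows "gen_hom n (pres_monoid n R) (pres_monoid n R') (pres_map R')"
  unfolding gen_hom_def
  using pres_map_hom pres_map_surj pres_map_preserves_elem_len[OF assms]
  by (simp add: one_pres_monoid pres_map_cls)

end

lemma length_alt: "length (alt i j r) = r"
  by (induction r arbitrary: i j) auto

lemma homogeneous_K_rels: "homogeneous (K_rels n)"
  by (auto simp: homogeneous_def K_rels_def)

lemma homogeneous_ra_rels: "homogeneous (ra_rels T)"
  by (auto simp: homogeneous_def ra_rels_def)

lemma homogeneous_artin_rels: "homogeneous (artin_rels T)"
  by (auto simp: homogeneous_def artin_rels_def length_alt)

lemma ra_rels_subset_artin_rels: "ra_rels T \<subseteq> artin_rels T"
proof
  fix x assume "x \<in> ra_rels T"
  then obtain i j where x: "x = ([i, j], [j, i])" and ij: "i \<in> {1..rank T}" "j \<in> {1..rank T}"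
    "i \<noteq> j" and lab: "lab T i j = 2"
    unfolding ra_rels_def by blast
  have "x = (alt i j (lab T i j), alt j i (lab T i j))"
    using x lab by (simp add: numeral_2_eq_2)
  then show "x \<in> artin_rels T"
    unfolding artin_rels_def using ij by blast
qed

text \<open>The extra condition for \<open>i = n\<close> is needed for \<open>D\<^sub>n\<close>, where \<open>x\<^sub>n\<close> is joined to \<open>x\<^sub>n\<^sub>-\<^sub>2\<close>.\<close>

lemma lab_nonadjacent:
  assumes "allowed_type T" and "1 \<le> j" and "j + 2 \<le> i" and "i \<le> rank T"
    and "i = rank T \<longrightarrow> j + 3 \<le> i"
  shows "lab T i j = 2"
proof -
  have "lab T i j = lab0 T j i" using assms(3) by (simp add: lab_def)
  also have "\<dots> = 2" using assms by (cases T) (simp_all add: allowed_type_def; arith)+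
  finally show ?thesis .
qed

lemma K_rels_subset_ra_rels:
  assumes "allowed_type T"
  shows "K_rels (rank T) \<subseteq> ra_rels T"
proof
  fix x assume "x \<in> K_rels (rank T)"
  then have "\<exists>i j. x = ([i, j], [j, i]) \<and> 1 \<le> j \<and> j + 2 \<le> i \<and> i \<le> rank T \<and>
      (i = rank T \<longrightarrow> j + 3 \<le> i)"
    unfolding K_rels_def by auto
  then obtain i j where x: "x = ([i, j], [j, i])" and ij: "1 \<le> j" "j + 2 \<le> i" "i \<le> rank T"
    and "i = rank T \<longrightarrow> j + 3 \<le> i"
    by blast
  with assms have "lab T i j = 2" by (intro lab_nonadjacent)
  moreover have "i \<in> {1..rank T}" "j \<in> {1..rank T}" "i \<noteq> j"
    using ij by auto
  ultimately show "x \<in> ra_rels T"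
    unfolding x ra_rels_def by blast
qed

theorem proposition1:
  fixes T :: cox_type
  assumes "allowed_type T"
  shows "\<exists>\<phi> \<psi>.
     (\<forall>i \<in> {1..rank T}. \<phi> (cls (K_rels (rank T)) [i]) = cls (ra_rels T) [i]) \<and>
     gen_hom (rank T) (K_monoid (rank T)) (ra_monoid T) \<phi> \<and>
     (\<forall>i \<in> {1..rank T}. \<psi> (cls (ra_rels T) [i]) = cls (artin_rels T) [i]) \<and>
     gen_hom (rank T) (ra_monoid T) (artin_monoid T) \<psi>"
proof (intro exI conjI)
  have K_ra: "pres_eq (ra_rels T) u v" if "(u, v) \<in> K_rels (rank T)" for u v
    using K_rels_subset_ra_rels[OF assms] that by (blast intro: pres_eq_rel)
  have ra_artin: "pres_eq (artin_rels T) u v" if "(u, v) \<in> ra_rels T" for u v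
    using ra_rels_subset_artin_rels that by (blast intro: pres_eq_rel)
  show "\<forall>i \<in> {1..rank T}. pres_map (ra_rels T) (cls (K_rels (rank T)) [i]) = cls (ra_rels T) [i]"
    using pres_map_cls[OF K_ra] by blast
  show "gen_hom (rank T) (K_monoid (rank T)) (ra_monoid T) (pres_map (ra_rels T))"
    unfolding K_monoid_def ra_monoid_def
    using pres_map_gen_hom[OF K_ra homogeneous_K_rels homogeneous_ra_rels] .
  show "\<forall>i \<in> {1..rank T}. pres_map (artin_rels T) (cls (ra_rels T) [i]) = cls (artin_rels T) [i]"
    using pres_map_cls[OF ra_artin] by blast
  show "gen_hom (rank T) (ra_monoid T) (artin_monoid T) (pres_map (artin_rels T))"
    unfolding ra_monoid_def artin_monoid_def
    using pres_map_gen_hom[OF ra_artin homogeneous_ra_rels homogeneous_artin_rels] .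
qed

end
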